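(* Let $D$ be a digraph of order $n$ and let $k\ge 2$ be an integer with $k\le n$. Then: (1) if $k\le n-1$, then $\lambda_{k+1}(D)\le \lambda_k(D)$; (2) if $D'$ is a spanning subgraph of $D$, then $\lambda_k(D')\le \lambda_k(D)$; (3) $\kappa_k(D)\le \lambda_k(D)\le \min\{\delta^+(D),\delta^-(D)\}$.
   Context: Digraphs are finite, without loops or parallel arcs. For $S\subseteq V(D)$, $\lambda_S(D)$ is the maximum number of pairwise arc-disjoint strong subgraphs of $D$ containing $S$, and $\lambda_k(D)=\min\{\lambda_S(D): S\subseteq V(D), |S|=k\}$ (strong subgraph $k$-arc-connectivity). Strong subgraphs $D_1,\dots,D_p$ containing $S$ are internally disjoint if $V(D_i)\cap V(D_j)=S$ and $A(D_i)\cap A(D_j)=\emptyset$ for all $i\ne j$; $\kappa_S(D)$ is the maximum number of internally disjoint strong subgraphs containing $S$, and $\kappa_k(D)=\min\{\kappa_S(D): S\subseteq V(D),|S|=k\}$. $\delta^+(D)$ and $\delta^-(D)$ denote the minimum out-degree and minimum in-degree of $D$. *)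

theory Defs
  imports Main
begin

text \<open>A (finite) digraph is given by a vertex set V and an arc set A \<subseteq> V \<times> V,
  without loops; parallel arcs are excluded automatically since A is a set.\<close>

definition digraph :: "'a set \<Rightarrow> ('a \<times> 'a) set \<Rightarrow> bool" where
  "digraph V A \<longleftrightarrow> finite V \<and> A \<subseteq> V \<times> V \<and> (\<forall>v. (v, v) \<notin> A)"

definition strong_subgraph_containing ::
  "'a set \<Rightarrow> ('a \<times> 'a) set \<Rightarrow> 'a set \<Rightarrow> 'a set \<times> ('a \<times> 'a) set \<Rightarrow> bool" where
  "strong_subgraph_containing V A S H \<longleftrightarrow>
     fst H \<subseteq> V \<and> snd H \<subseteq> A \<and> snd H \<subseteq> fst H \<times> fst H \<and> fst H \<noteq> {} \<and> S \<subseteq> fst H \<and>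
     (\<forall>u\<in>fst H. \<forall>v\<in>fst H. (u, v) \<in> (snd H)\<^sup>*)"

definition lambda_S :: "'a set \<Rightarrow> ('a \<times> 'a) set \<Rightarrow> 'a set \<Rightarrow> nat" where
  "lambda_S V A S = Max {p. \<exists>H :: nat \<Rightarrow> 'a set \<times> ('a \<times> 'a) set.
      (\<forall>i<p. strong_subgraph_containing V A S (H i)) \<and>
      (\<forall>i<p. \<forall>j<p. i \<noteq> j \<longrightarrow> snd (H i) \<inter> snd (H j) = {})}"

definition kappa_S :: "'a set \<Rightarrow> ('a \<times> 'a) set \<Rightarrow> 'a set \<Rightarrow> nat" where
  "kappa_S V A S = Max {p. \<exists>H :: nat \<Rightarrow> 'a set \<times> ('a \<times> 'a) set.
      (\<forall>i<p. strong_subgraph_containing V A S (H i)) \<and>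
      (\<forall>i<p. \<forall>j<p. i \<noteq> j \<longrightarrow> fst (H i) \<inter> fst (H j) = S \<and> snd (H i) \<inter> snd (H j) = {})}"

definition lambda_k :: "'a set \<Rightarrow> ('a \<times> 'a) set \<Rightarrow> nat \<Rightarrow> nat" where
  "lambda_k V A k = Min ((\<lambda>S. lambda_S V A S) ` {S. S \<subseteq> V \<and> card S = k})"

definition kappa_k :: "'a set \<Rightarrow> ('a \<times> 'a) set \<Rightarrow> nat \<Rightarrow> nat" where
  "kappa_k V A k = Min ((\<lambda>S. kappa_S V A S) ` {S. S \<subseteq> V \<and> card S = k})"

definition min_out_degree :: "'a set \<Rightarrow> ('a \<times> 'a) set \<Rightarrow> nat" where
  "min_out_degree V A = Min ((\<lambda>v. card {w. (v, w) \<in> A}) ` V)"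

definition min_in_degree :: "'a set \<Rightarrow> ('a \<times> 'a) set \<Rightarrow> nat" where
  "min_in_degree V A = Min ((\<lambda>v. card {u. (u, v) \<in> A}) ` V)"

end

theory Submission
  imports Defs
begin

text \<open>Shrinking the terminal set S or enlarging the arc set only makes more families of
  strong subgraphs admissible, and every internally disjoint family is arc-disjoint; passing
  to maxima and then to minima over all k-sets gives (1), (2) and kappa_k \<le> lambda_k.
  For the degree bound, any vertex v lies in some k-set S, which also contains a vertex
  u \<noteq> v. A strong subgraph containing S has a path from v to u and one from u to v,
  hence an arc leaving v and an arc entering v; arc-disjoint subgraphs use distinct such
  arcs, so there are at most as many of them as v has out- and in-neighbours.\<close>

definition arc_disjoint_family_sizes :: "'a set \<Rightarrow> ('a \<times> 'a) set \<Rightarrow> 'a set \<Rightarrow> nat set" where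
  "arc_disjoint_family_sizes V A S = {p. \<exists>H :: nat \<Rightarrow> 'a set \<times> ('a \<times> 'a) set.
      (\<forall>i<p. strong_subgraph_containing V A S (H i)) \<and>
      (\<forall>i<p. \<forall>j<p. i \<noteq> j \<longrightarrow> snd (H i) \<inter> snd (H j) = {})}"

definition internally_disjoint_family_sizes :: "'a set \<Rightarrow> ('a \<times> 'a) set \<Rightarrow> 'a set \<Rightarrow> nat set" where
  "internally_disjoint_family_sizes V A S = {p. \<exists>H :: nat \<Rightarrow> 'a set \<times> ('a \<times> 'a) set.
      (\<forall>i<p. strong_subgraph_containing V A S (H i)) \<and>
      (\<forall>i<p. \<forall>j<p. i \<noteq> j \<longrightarrow> fst (H i) \<inter> fst (H j) = S \<and> snd (H i) \<inter> snd (H j) = {})}"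

lemma lambda_S_eq_Max_arc_disjoint_family_sizes:
  "lambda_S V A S = Max (arc_disjoint_family_sizes V A S)"
  unfolding lambda_S_def arc_disjoint_family_sizes_def ..

lemma kappa_S_eq_Max_internally_disjoint_family_sizes:
  "kappa_S V A S = Max (internally_disjoint_family_sizes V A S)"
  unfolding kappa_S_def internally_disjoint_family_sizes_def ..

lemma zero_in_arc_disjoint_family_sizes: "0 \<in> arc_disjoint_family_sizes V A S"
  unfolding arc_disjoint_family_sizes_def by simp

lemma internally_disjoint_family_sizes_subset:
  "internally_disjoint_family_sizes V A S \<subseteq> arc_disjoint_family_sizes V A S"
  unfolding internally_disjoint_family_sizes_def arc_disjoint_family_sizes_def
  by (intro Collect_mono ex_mono) auto

lemma arc_disjoint_family_sizes_mono_arcs: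
  assumes "A' \<subseteq> A"
  shows "arc_disjoint_family_sizes V A' S \<subseteq> arc_disjoint_family_sizes V A S"
proof -
  have "strong_subgraph_containing V A S H" if "strong_subgraph_containing V A' S H" for H
    using that assms unfolding strong_subgraph_containing_def by blast
  then show ?thesis
    unfolding arc_disjoint_family_sizes_def by (intro Collect_mono ex_mono) auto
qed

lemma arc_disjoint_family_sizes_antimono_terminals:
  assumes "S \<subseteq> S'"
  shows "arc_disjoint_family_sizes V A S' \<subseteq> arc_disjoint_family_sizes V A S"
proof -
  have "strong_subgraph_containing V A S H" if "strong_subgraph_containing V A S' H" for H
    using that assms unfolding strong_subgraph_containing_def by blast
  then show ?thesis
    unfolding arc_disjoint_family_sizes_def by (intro Collect_mono ex_mono) auto
qed

lemma strong_subgraph_out_in_arcs: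
  assumes "strong_subgraph_containing V A S H" and "u \<in> S" "v \<in> S" "u \<noteq> v"
  shows "\<exists>w. (u, w) \<in> snd H" and "\<exists>w. (w, u) \<in> snd H"
proof -
  have "(u, v) \<in> (snd H)\<^sup>*" and "(v, u) \<in> (snd H)\<^sup>*"
    using assms(1-3) unfolding strong_subgraph_containing_def by blast+
  with \<open>u \<noteq> v\<close> show "\<exists>w. (u, w) \<in> snd H" and "\<exists>w. (w, u) \<in> snd H"
    by (auto elim: converse_rtranclE rtranclE)
qed

lemma disjoint_nonempty_family_size_le_card:
  assumes "finite E"
    and "\<forall>i<p. B i \<noteq> {} \<and> B i \<subseteq> E"
    and "\<forall>i<p. \<forall>j<p. i \<noteq> j \<longrightarrow> B i \<inter> B j = {}"
  shows "p \<le> card E"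
proof -
  have finite_B: "\<forall>i\<in>{..<p}. finite (B i)"
    using assms(1,2) finite_subset by blast
  have "p = (\<Sum>i<p. 1)" by simp
  also have "\<dots> \<le> (\<Sum>i<p. card (B i))"
    using assms(2) finite_B by (intro sum_mono) (simp add: Suc_le_eq card_gt_0_iff)
  also have "\<dots> = card (\<Union>i<p. B i)"
    using assms(3) finite_B by (intro card_UN_disjoint[symmetric]) auto
  also have "\<dots> \<le> card E"
    using assms(1,2) by (intro card_mono) auto
  finally show ?thesis .
qed

lemma arc_disjoint_family_size_le_degrees:
  assumes "finite A" and "u \<in> S" "v \<in> S" "u \<noteq> v"
    and "p \<in> arc_disjoint_family_sizes V A S"
  shows "p \<le> card {w. (u, w) \<in> A}" and "p \<le> card {w. (w, u) \<in> A}"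
proof -
  obtain H where strong: "\<forall>i<p. strong_subgraph_containing V A S (H i)"
    and disjoint: "\<forall>i<p. \<forall>j<p. i \<noteq> j \<longrightarrow> snd (H i) \<inter> snd (H j) = {}"
    using assms(5) unfolding arc_disjoint_family_sizes_def by blast
  have arcs: "\<forall>i<p. snd (H i) \<subseteq> A"
    using strong unfolding strong_subgraph_containing_def by blast
  have "finite {w. (u, w) \<in> A}"
    using finite_Image[OF \<open>finite A\<close>, of "{u}"] by (simp add: Image_singleton)
  then show "p \<le> card {w. (u, w) \<in> A}"
  proof (rule disjoint_nonempty_family_size_le_card[where B = "\<lambda>i. {w. (u, w) \<in> snd (H i)}"])
    show "\<forall>i<p. {w. (u, w) \<in> snd (H i)} \<noteq> {} \<and> {w. (u, w) \<in> snd (H i)} \<subseteq> {w. (u, w) \<in> A}"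
      using strong arcs strong_subgraph_out_in_arcs(1)[OF _ assms(2-4)] by blast
  qed (use disjoint in blast)
  have "finite {w. (w, u) \<in> A}"
    using finite_Image[of "A\<inverse>" "{u}"] \<open>finite A\<close> by (simp add: Image_singleton)
  then show "p \<le> card {w. (w, u) \<in> A}"
  proof (rule disjoint_nonempty_family_size_le_card[where B = "\<lambda>i. {w. (w, u) \<in> snd (H i)}"])
    show "\<forall>i<p. {w. (w, u) \<in> snd (H i)} \<noteq> {} \<and> {w. (w, u) \<in> snd (H i)} \<subseteq> {w. (w, u) \<in> A}"
      using strong arcs strong_subgraph_out_in_arcs(2)[OF _ assms(2-4)] by blast
  qed (use disjoint in blast)
qed

text \<open>Two distinct terminals are essential: for S = {u} the trivial subgraphs ({u}, {}) are
  pairwise arc-disjoint, so the family sizes are unbounded and lambda_S is a junk Max.\<close>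

lemma finite_arc_disjoint_family_sizes:
  assumes "finite A" and "u \<in> S" "v \<in> S" "u \<noteq> v"
  shows "finite (arc_disjoint_family_sizes V A S)"
proof -
  have "arc_disjoint_family_sizes V A S \<subseteq> {..card {w. (u, w) \<in> A}}"
    using arc_disjoint_family_size_le_degrees(1)[OF assms] by blast
  then show ?thesis using finite_subset by blast
qed

lemma two_le_card_obtains_distinct:
  assumes "2 \<le> card S"
  obtains u v where "u \<in> S" "v \<in> S" "u \<noteq> v"
proof -
  have "finite S" using assms card.infinite by fastforce
  then show ?thesis using assms card_le_Suc0_iff_eq[of S] that by fastforce
qed

lemma lambda_S_greatest_family_size:
  assumes "finite A" and "u \<in> S" "v \<in> S" "u \<noteq> v"
  shows "lambda_S V A S \<in> arc_disjoint_family_sizes V A S"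
    and "p \<in> arc_disjoint_family_sizes V A S \<Longrightarrow> p \<le> lambda_S V A S"
  unfolding lambda_S_eq_Max_arc_disjoint_family_sizes
  using finite_arc_disjoint_family_sizes[OF assms, of V] zero_in_arc_disjoint_family_sizes[of V A S]
  by (auto intro: Max_in)

lemma lambda_S_mono_arcs:
  assumes "finite A" "2 \<le> card S" "A' \<subseteq> A"
  shows "lambda_S V A' S \<le> lambda_S V A S"
proof -
  obtain u v where uv: "u \<in> S" "v \<in> S" "u \<noteq> v"
    using assms(2) by (rule two_le_card_obtains_distinct)
  have "finite A'" using assms(1,3) finite_subset by blast
  from lambda_S_greatest_family_size(1)[OF this uv] show ?thesis
    using arc_disjoint_family_sizes_mono_arcs[OF assms(3)]
    by (intro lambda_S_greatest_family_size(2)[OF assms(1) uv]) blast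
qed

lemma lambda_S_antimono_terminals:
  assumes "finite A" "2 \<le> card S" "S \<subseteq> S'"
  shows "lambda_S V A S' \<le> lambda_S V A S"
proof -
  obtain u v where uv: "u \<in> S" "v \<in> S" "u \<noteq> v"
    using assms(2) by (rule two_le_card_obtains_distinct)
  with assms(3) have "u \<in> S'" "v \<in> S'" by auto
  from lambda_S_greatest_family_size(1)[OF assms(1) this uv(3)] show ?thesis
    using arc_disjoint_family_sizes_antimono_terminals[OF assms(3)]
    by (intro lambda_S_greatest_family_size(2)[OF assms(1) uv]) blast
qed

lemma kappa_S_le_lambda_S:
  assumes "finite A" "2 \<le> card S"
  shows "kappa_S V A S \<le> lambda_S V A S"
proof -
  obtain u v where uv: "u \<in> S" "v \<in> S" "u \<noteq> v"
    using assms(2) by (rule two_le_card_obtains_distinct)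
  show ?thesis
    unfolding lambda_S_eq_Max_arc_disjoint_family_sizes kappa_S_eq_Max_internally_disjoint_family_sizes
  proof (rule Max_mono[OF internally_disjoint_family_sizes_subset])
    show "internally_disjoint_family_sizes V A S \<noteq> {}"
      unfolding internally_disjoint_family_sizes_def by auto
  qed (rule finite_arc_disjoint_family_sizes[OF assms(1) uv])
qed

lemma lambda_S_le_degrees:
  assumes "finite A" and "u \<in> S" "v \<in> S" "u \<noteq> v"
  shows "lambda_S V A S \<le> card {w. (u, w) \<in> A}" and "lambda_S V A S \<le> card {w. (w, u) \<in> A}"
  using arc_disjoint_family_size_le_degrees[OF assms lambda_S_greatest_family_size(1)[OF assms]]
  by blast+

lemma Min_image_mono:
  fixes f g :: "'a \<Rightarrow> 'b::linorder"
  assumes "finite K" "K \<noteq> {}" "\<And>x. x \<in> K \<Longrightarrow> f x \<le> g x"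
  shows "Min (f ` K) \<le> Min (g ` K)"
  using assms by (auto simp: Min_ge_iff intro: order_trans[OF Min_le])

lemma finite_card_subsets: "finite V \<Longrightarrow> finite {S. S \<subseteq> V \<and> card S = k}"
  by (rule finite_subset[of _ "Pow V"]) auto

lemma card_subsets_nonempty: "k \<le> card V \<Longrightarrow> {S. S \<subseteq> V \<and> card S = k} \<noteq> {}"
  by (auto elim: obtain_subset_with_card_n)

lemma lambda_k_le_lambda_S:
  assumes "finite V" "S \<subseteq> V" "card S = k"
  shows "lambda_k V A k \<le> lambda_S V A S"
  unfolding lambda_k_def using assms finite_card_subsets by (intro Min_le) auto

lemma lambda_k_attained:
  assumes "finite V" "k \<le> card V"
  obtains S where "S \<subseteq> V" "card S = k" "lambda_k V A k = lambda_S V A S"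
proof -
  have "lambda_k V A k \<in> (\<lambda>S. lambda_S V A S) ` {S. S \<subseteq> V \<and> card S = k}"
    unfolding lambda_k_def
    using assms finite_card_subsets card_subsets_nonempty by (intro Min_in) auto
  then show ?thesis using that by auto
qed

lemma lambda_k_Suc_le:
  assumes "finite V" "finite A" "2 \<le> k" "k < card V"
  shows "lambda_k V A (k + 1) \<le> lambda_k V A k"
proof -
  obtain S where S: "S \<subseteq> V" "card S = k" and min: "lambda_k V A k = lambda_S V A S"
    using lambda_k_attained[OF assms(1)] assms(4) by (metis less_imp_le)
  have "\<not> V \<subseteq> S"
    using S assms(1,4) card_mono[of S V] by (metis finite_subset not_le)
  then obtain x where x: "x \<in> V" "x \<notin> S" by blast
  have "card (insert x S) = k + 1"
    using S x assms(1) finite_subset by fastforce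
  then have "lambda_k V A (k + 1) \<le> lambda_S V A (insert x S)"
    using S x assms(1) by (intro lambda_k_le_lambda_S) auto
  also have "\<dots> \<le> lambda_S V A S"
    using S assms(2,3) by (intro lambda_S_antimono_terminals) auto
  finally show ?thesis using min by simp
qed

lemma lambda_k_mono_arcs:
  assumes "finite V" "finite A" "2 \<le> k" "k \<le> card V" "A' \<subseteq> A"
  shows "lambda_k V A' k \<le> lambda_k V A k"
  unfolding lambda_k_def
  using assms finite_card_subsets card_subsets_nonempty lambda_S_mono_arcs
  by (intro Min_image_mono) auto

lemma kappa_k_le_lambda_k:
  assumes "finite V" "finite A" "2 \<le> k" "k \<le> card V"
  shows "kappa_k V A k \<le> lambda_k V A k"
  unfolding lambda_k_def kappa_k_def
  using assms finite_card_subsets card_subsets_nonempty kappa_S_le_lambda_S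
  by (intro Min_image_mono) auto

lemma lambda_k_le_degrees:
  assumes "finite V" "finite A" "2 \<le> k" "k \<le> card V" "v \<in> V"
  shows "lambda_k V A k \<le> card {w. (v, w) \<in> A}" and "lambda_k V A k \<le> card {w. (w, v) \<in> A}"
proof -
  have "k - 1 \<le> card (V - {v})" using assms by simp
  then obtain T where T: "T \<subseteq> V - {v}" "card T = k - 1" "finite T"
    by (rule obtain_subset_with_card_n)
  obtain u where "u \<in> T" using T assms(3) by fastforce
  have "v \<notin> T" using T(1) by blast
  define S where "S = insert v T"
  have S: "S \<subseteq> V" "card S = k" "v \<in> S" "u \<in> S" "u \<noteq> v"
    using T assms(3,5) \<open>u \<in> T\<close> \<open>v \<notin> T\<close> unfolding S_def by auto
  have "lambda_k V A k \<le> lambda_S V A S"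
    using assms(1) S(1,2) by (rule lambda_k_le_lambda_S)
  with lambda_S_le_degrees[OF assms(2) S(3,4) S(5)[symmetric], of V]
  show "lambda_k V A k \<le> card {w. (v, w) \<in> A}" and "lambda_k V A k \<le> card {w. (w, v) \<in> A}"
    by simp_all
qed

lemma lambda_k_le_min_degrees:
  assumes "finite V" "finite A" "2 \<le> k" "k \<le> card V"
  shows "lambda_k V A k \<le> min (min_out_degree V A) (min_in_degree V A)"
proof -
  have "V \<noteq> {}" using assms(3,4) by auto
  then show ?thesis
    unfolding min_out_degree_def min_in_degree_def
    using assms(1) lambda_k_le_degrees[OF assms] by simp
qed

theorem proposition3p1:
  fixes V :: "'a set" and A :: "('a \<times> 'a) set" and n k :: nat
  assumes "digraph V A" and "card V = n" and "2 \<le> k" and "k \<le> n"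
  shows "(k \<le> n - 1 \<longrightarrow> lambda_k V A (k + 1) \<le> lambda_k V A k)
       \<and> (\<forall>A'. A' \<subseteq> A \<longrightarrow> lambda_k V A' k \<le> lambda_k V A k)
       \<and> kappa_k V A k \<le> lambda_k V A k
       \<and> lambda_k V A k \<le> min (min_out_degree V A) (min_in_degree V A)"
proof -
  have "finite V" and "A \<subseteq> V \<times> V"
    using assms(1) unfolding digraph_def by auto
  then have "finite A" using finite_subset by blast
  with \<open>finite V\<close> assms show ?thesis
    by (intro conjI impI allI lambda_k_Suc_le lambda_k_mono_arcs kappa_k_le_lambda_k
        lambda_k_le_min_degrees) auto
qed

end
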